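(* Let $k\ge1$, $\epsilon\in\mathbb{R}$, $\bm\mu_X,\bm\mu_{X'}\in\mathbb{R}^k$, and let $\bm\Sigma_X,\bm\Sigma_{X'}$ be symmetric positive definite $k\times k$ matrices. Let $\bm q\sim\mathcal N(\bm\mu_X,\bm\Sigma_X)$ and $L_{XX'}(\bm q)=\ln\frac{f(\bm q\mid X)}{f(\bm q\mid X')}$, where $f(\cdot\mid X)$, $f(\cdot\mid X')$ are the densities of $\mathcal N(\bm\mu_X,\bm\Sigma_X)$ and $\mathcal N(\bm\mu_{X'},\bm\Sigma_{X'})$. Let $\bm U_{XX'}\bm\Gamma_{XX'}\bm U_{XX'}^\top=\bm\Sigma_X^{1/2}\bm\Sigma_{X'}^{-1}\bm\Sigma_X^{1/2}$ be an eigenvalue decomposition with $\bm U_{XX'}$ orthogonal and $\bm\Gamma_{XX'}$ diagonal, let $\gamma_1=\lambda_{\max}(\bm\Sigma_X^{1/2}\bm\Sigma_{X'}^{-1}\bm\Sigma_X^{1/2})$, and let $\bm\mu_{XX'}=\bm U_{XX'}^\top\bm\Sigma_X^{-1/2}(\bm\mu_{X'}-\bm\mu_X)$. Then for all $s>\max(1,\gamma_1)$, $$\Pr\big(L_{XX'}(\bm q)>\epsilon\big)\le\frac{(s-1)^{k/2}}{|\bm\Gamma_{XX'}|^{\frac{1}{2(s-1)}}\,|s\bm I-\bm\Gamma_{XX'}|^{1/2}}\exp\!\left(-\frac{\epsilon}{s-1}+\frac{s}{2(s-1)}\bm\mu_{XX'}^\top(s\bm I-\bm\Gamma_{XX'}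)^{-1}\bm\Gamma_{XX'}\bm\mu_{XX'}\right).$$
   Context: $|\bm A|$ denotes the determinant, $\lambda_{\max}$ the largest eigenvalue, and $\bm\Sigma^{1/2}$, $\bm\Sigma^{-1/2}$ the symmetric positive definite square root of a symmetric positive definite matrix and its inverse. *)

theory Defs
  imports "HOL-Analysis.Analysis"
begin

definition symmetric_pd :: "real^'k^'k \<Rightarrow> bool" where
  "symmetric_pd A \<longleftrightarrow> transpose A = A \<and> (\<forall>x. x \<noteq> 0 \<longrightarrow> x \<bullet> (A *v x) > 0)"

definition diagonal_mat :: "real^'k^'k \<Rightarrow> bool" where
  "diagonal_mat A \<longleftrightarrow> (\<forall>i j. i \<noteq> j \<longrightarrow> A $ i $ j = 0)"

definition lambda_max :: "real^'k^'k \<Rightarrow> real" where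
  "lambda_max A = Max {l. \<exists>v. v \<noteq> 0 \<and> A *v v = l *\<^sub>R v}"

definition gauss_density :: "real^'k \<Rightarrow> real^'k^'k \<Rightarrow> real^'k \<Rightarrow> real" where
  "gauss_density mu Sig q =
     exp (- (1/2) * ((q - mu) \<bullet> (matrix_inv Sig *v (q - mu))))
     / sqrt ((2 * pi) ^ CARD('k) * det Sig)"

definition gauss_measure :: "real^'k \<Rightarrow> real^'k^'k \<Rightarrow> (real^'k) measure" where
  "gauss_measure mu Sig = density lborel (\<lambda>q. ennreal (gauss_density mu Sig q))"

end

theory Submission
  imports Defs "HOL-Probability.Probability"
begin

(* Chernoff: with t = 1/(s - 1) > 0, Pr(L > eps) <= exp(-t eps) E[exp(t L)].
   In the coordinates q = mu_X + Sigma_X^(1/2) U z the law N(mu_X, Sigma_X) becomes the standard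
   normal law, and L(q) = ((z - mu)' Gamma (z - mu) - |z|^2)/2 - ln|Gamma|/2 with mu = mu_XX'.
   Since Gamma is diagonal, E[exp(t L)] is a product of k one-dimensional Gaussian integrals,
   each finite because gamma_i <= gamma_1 < s; evaluating them gives the bound. *)

section \<open>Positive definite and diagonal matrices\<close>

lemma matrix_inv_right: "invertible A \<Longrightarrow> A ** matrix_inv A = mat 1"
  and matrix_inv_left: "invertible A \<Longrightarrow> matrix_inv A ** A = mat 1"
  unfolding invertible_def matrix_inv_def by (metis (mono_tags, lifting) someI_ex)+

lemma symmetric_pd_invertible:
  assumes "symmetric_pd A"
  shows "invertible A"
proof -
  have "\<forall>x. A *v x = 0 \<longrightarrow> x = 0"
    using assms unfolding symmetric_pd_def by (metis inner_zero_right less_irrefl)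
  then obtain B where "B ** A = mat 1"
    using matrix_left_invertible_ker by blast
  then show ?thesis
    unfolding invertible_def using matrix_left_right_inverse by blast
qed

lemma symmetric_pd_inner_matrix_inv_pos:
  assumes "symmetric_pd A" and "y \<noteq> 0"
  shows "0 < y \<bullet> (matrix_inv A *v y)"
proof -
  define x where "x = matrix_inv A *v y"
  have Ax: "A *v x = y"
    using symmetric_pd_invertible[OF assms(1)]
    by (simp add: x_def matrix_vector_mul_assoc matrix_inv_right)
  then have "x \<noteq> 0"
    using assms(2) by auto
  then have "0 < x \<bullet> (A *v x)"
    using assms(1) by (simp add: symmetric_pd_def)
  also have "x \<bullet> (A *v x) = y \<bullet> (matrix_inv A *v y)"
    unfolding Ax x_def[symmetric] by (rule inner_commute)
  finally show ?thesis .
qed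

lemma inner_mult_vec_congruence:
  fixes P :: "real^'n^'m"
  shows "(P *v x) \<bullet> (A *v (P *v y)) = x \<bullet> ((transpose P ** A ** P) *v y)"
proof -
  have "(P *v x) \<bullet> w = x \<bullet> (transpose P *v w)" for w
  proof -
    have "x \<bullet> (transpose P *v w) = (w v* P) \<bullet> x"
      unfolding transpose_matrix_vector by (rule inner_commute)
    also have "\<dots> = (P *v x) \<bullet> w"
      unfolding dot_lmul_matrix by (rule inner_commute)
    finally show ?thesis ..
  qed
  then show ?thesis
    by (simp add: matrix_vector_mul_assoc matrix_mul_assoc del: transpose_matrix_vector)
qed

lemma diagonal_mat_mult_vec_nth:
  assumes "diagonal_mat D"
  shows "(D *v v) $ i = D $ i $ i * v $ i"
proof -
  have "(D *v v) $ i = (\<Sum>j\<in>UNIV. D $ i $ j * v $ j)"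
    by (simp add: matrix_vector_mult_def)
  also have "\<dots> = (\<Sum>j\<in>UNIV. if j = i then D $ i $ i * v $ i else 0)"
    using assms by (intro sum.cong) (auto simp: diagonal_mat_def)
  finally show ?thesis
    by simp
qed

lemma inner_diagonal_mat_mult_vec:
  "diagonal_mat D \<Longrightarrow> v \<bullet> (D *v w) = (\<Sum>i\<in>UNIV. D $ i $ i * v $ i * w $ i)"
  by (simp add: inner_vec_def diagonal_mat_mult_vec_nth mult_ac)

lemma det_diagonal_mat: "diagonal_mat D \<Longrightarrow> det D = (\<Prod>i\<in>UNIV. D $ i $ i)"
  by (rule det_diagonal) (simp add: diagonal_mat_def)

lemma matrix_inv_diagonal_mat_mult_vec_nth:
  assumes "diagonal_mat D" and "\<And>i. D $ i $ i \<noteq> 0"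
  shows "(matrix_inv D *v v) $ i = v $ i / D $ i $ i"
proof -
  have "invertible D"
    using assms by (simp add: invertible_det_nz det_diagonal_mat)
  then have "D *v (matrix_inv D *v v) = v"
    by (simp add: matrix_vector_mul_assoc matrix_inv_right)
  then have "D $ i $ i * (matrix_inv D *v v) $ i = v $ i"
    by (metis assms(1) diagonal_mat_mult_vec_nth)
  then show ?thesis
    using assms(2)[of i] by (simp add: field_simps)
qed

lemma diagonal_mat_shift: "diagonal_mat D \<Longrightarrow> diagonal_mat (s *\<^sub>R mat 1 - D)"
  by (simp add: diagonal_mat_def mat_def)

lemma det_diagonal_mat_shift_pos:
  assumes "diagonal_mat D" and "\<And>i. D $ i $ i < s"
  shows "0 < det (s *\<^sub>R mat 1 - D)"
  unfolding det_diagonal_mat[OF diagonal_mat_shift[OF assms(1)]] using assms(2) by (simp add: mat_def prod_pos)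

lemma orthogonal_matrix_mult_vec_cancel:
  fixes U :: "real^'k^'k"
  assumes "orthogonal_matrix U"
  shows "transpose U *v (U *v x) = x" and "U *v (transpose U *v x) = x"
  using assms
  by (simp_all add: orthogonal_matrix_def matrix_vector_mul_assoc del: transpose_matrix_vector)

lemma matrix_conj_mult_vec:
  fixes U G :: "real^'k^'k"
  shows "(U ** G ** transpose U) *v x = U *v (G *v (transpose U *v x))"
  by (simp add: matrix_vector_mul_assoc matrix_mul_assoc del: transpose_matrix_vector)

lemma eigenvalue_orthogonal_similar_diagonal:
  fixes U G :: "real^'k^'k"
  assumes U: "orthogonal_matrix U" and G: "diagonal_mat G"
    and "v \<noteq> 0" and eigen: "(U ** G ** transpose U) *v v = l *\<^sub>R v"
  shows "l \<in> range (\<lambda>j. G $ j $ j)"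
proof -
  define w where "w = transpose U *v v"
  have "w \<noteq> 0"
    using \<open>v \<noteq> 0\<close> orthogonal_matrix_mult_vec_cancel(2)[OF U, of v] by (auto simp: w_def)
  then obtain j where j: "w $ j \<noteq> 0"
    by (auto simp: vec_eq_iff)
  have "G *v w = transpose U *v ((U ** G ** transpose U) *v v)"
    by (simp only: matrix_conj_mult_vec orthogonal_matrix_mult_vec_cancel(1)[OF U] w_def)
  also have "\<dots> = l *\<^sub>R w"
    by (simp only: eigen w_def matrix_vector_mult_scaleR)
  finally have "(G *v w) $ j = (l *\<^sub>R w) $ j"
    by simp
  then have "G $ j $ j * w $ j = l * w $ j"
    by (simp add: diagonal_mat_mult_vec_nth[OF G])
  then have "l = G $ j $ j"
    using j by simp
  then show ?thesis
    by blast
qed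

lemma diagonal_le_lambda_max:
  fixes U G :: "real^'k^'k"
  assumes U: "orthogonal_matrix U" and G: "diagonal_mat G"
  shows "G $ i $ i \<le> lambda_max (U ** G ** transpose U)"
proof -
  define E where "E = {l. \<exists>v. v \<noteq> 0 \<and> (U ** G ** transpose U) *v v = l *\<^sub>R v}"
  have "finite E"
    by (rule finite_subset[of _ "range (\<lambda>j. G $ j $ j)"])
      (auto simp: E_def intro: eigenvalue_orthogonal_similar_diagonal[OF U G])
  have "G *v axis i 1 = G $ i $ i *\<^sub>R axis i 1"
    by (simp add: vec_eq_iff diagonal_mat_mult_vec_nth[OF G] axis_def)
  then have "(U ** G ** transpose U) *v (U *v axis i 1) = G $ i $ i *\<^sub>R (U *v axis i 1)"
    by (simp add: matrix_conj_mult_vec orthogonal_matrix_mult_vec_cancel[OF U]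
        matrix_vector_mult_scaleR del: transpose_matrix_vector)
  moreover have "U *v axis i 1 \<noteq> 0"
    using orthogonal_matrix_mult_vec_cancel(1)[OF U, of "axis i 1"] by auto
  ultimately have "G $ i $ i \<in> E"
    unfolding E_def by blast
  then show ?thesis
    unfolding lambda_max_def E_def[symmetric] using \<open>finite E\<close> by simp
qed

section \<open>Lebesgue measure under linear changes of variables\<close>

(* The change of variables theorems of Change_Of_Vars are stated for wellordered index types only.
   They transfer to an arbitrary finite index type through this copy of it, ordered by to_nat:
   relabelling coordinates preserves both Lebesgue measure and determinants. *)
typedef ('a::finite) ordered_copy = "UNIV :: 'a set"
  morphisms from_copy to_copy by simp

instantiation ordered_copy :: (finite) linorder
begin

definition less_eq_ordered_copy :: "'a ordered_copy \<Rightarrow> 'a ordered_copy \<Rightarrow> bool"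
  where "x \<le> y \<longleftrightarrow> to_nat (from_copy x) \<le> to_nat (from_copy y)"

definition less_ordered_copy :: "'a ordered_copy \<Rightarrow> 'a ordered_copy \<Rightarrow> bool"
  where "x < y \<longleftrightarrow> to_nat (from_copy x) < to_nat (from_copy y)"

instance proof
  fix x y :: "'a ordered_copy"
  show "x \<le> y \<Longrightarrow> y \<le> x \<Longrightarrow> x = y"
    unfolding less_eq_ordered_copy_def by (metis antisym from_copy_inject to_nat_split)
qed (auto simp: less_eq_ordered_copy_def less_ordered_copy_def)

end

instance ordered_copy :: (finite) finite
  by standard (metis finite_imageI type_definition.univ type_definition_ordered_copy finite)

instance ordered_copy :: (finite) wellorder
proof
  fix P :: "'a ordered_copy \<Rightarrow> bool" and a
  assume step: "\<And>x. (\<And>y. y < x \<Longrightarrow> P y) \<Longrightarrow> P x"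
  show "P a"
    by (induct a rule: measure_induct_rule[of "\<lambda>x. to_nat (from_copy x)"])
      (rule step, simp add: less_ordered_copy_def)
qed

lemma bij_from_copy: "bij from_copy"
  by (metis bij_betw_def from_copy_inject injI surj_def to_copy_inverse UNIV_I)

lemma inv_from_copy: "inv from_copy = to_copy"
  by (metis bij_from_copy bij_inv_eq_iff ext to_copy_inverse UNIV_I)

definition copy_vec :: "real^'k::finite \<Rightarrow> real^'k ordered_copy"
  where "copy_vec x = (\<chi> j. x $ from_copy j)"

definition uncopy_vec :: "real^'k ordered_copy \<Rightarrow> real^'k::finite"
  where "uncopy_vec y = (\<chi> i. y $ to_copy i)"

definition copy_mat :: "real^'k::finite^'k \<Rightarrow> real^'k ordered_copy^'k ordered_copy"
  where "copy_mat A = (\<chi> i j. A $ from_copy i $ from_copy j)"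

lemma uncopy_copy_vec [simp]: "uncopy_vec (copy_vec x) = x"
  by (simp add: copy_vec_def uncopy_vec_def to_copy_inverse vec_eq_iff)

lemma copy_uncopy_vec [simp]: "copy_vec (uncopy_vec y) = y"
  by (simp add: copy_vec_def uncopy_vec_def from_copy_inverse vec_eq_iff)

lemma copy_mat_mult_copy_vec: "copy_mat A *v copy_vec x = copy_vec (A *v x)"
  by (simp add: copy_mat_def copy_vec_def matrix_vector_mult_def vec_eq_iff
      sum.reindex_bij_betw[OF bij_from_copy, of "\<lambda>j. A $ _ $ j * x $ j"])

lemma uncopy_vec_copy_mat_mult: "A *v uncopy_vec y = uncopy_vec (copy_mat A *v y)"
  by (metis copy_mat_mult_copy_vec copy_uncopy_vec uncopy_copy_vec)

lemma det_copy_mat: "det (copy_mat A) = det A"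
proof -
  let ?conj = "\<lambda>p x. from_copy (p (to_copy x))"
  have perm_bij: "bij_betw ?conj {p. p permutes UNIV} {p. p permutes (UNIV :: 'a set)}"
    using bij_betw_permutations[OF bij_from_copy] by (simp add: inv_from_copy)
  have "of_int (sign p) * (\<Prod>i\<in>UNIV. A $ from_copy i $ from_copy (p i))
      = of_int (sign (?conj p)) * (\<Prod>j\<in>UNIV. A $ j $ ?conj p j)" if "p permutes UNIV" for p
  proof -
    interpret permutes_bij_finite p UNIV UNIV from_copy to_copy
        "\<lambda>x. if x \<in> UNIV then from_copy (p (to_copy x)) else x"
      by unfold_locales (use that bij_from_copy in \<open>auto simp: from_copy_inverse\<close>)
    have "sign (?conj p) = sign p"
      using sign_p' by simp
    moreover have "(\<Prod>i\<in>UNIV. A $ from_copy i $ from_copy (p i)) = (\<Prod>j\<in>UNIV. A $ j $ ?conj p j)"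
      using prod.reindex_bij_betw[OF bij_from_copy, of "\<lambda>j. A $ j $ ?conj p j"]
      by (simp add: from_copy_inverse)
    ultimately show ?thesis by simp
  qed
  then have "det (copy_mat A) = (\<Sum>p\<in>{p. p permutes UNIV}.
      of_int (sign (?conj p)) * (\<Prod>j\<in>UNIV. A $ j $ ?conj p j))"
    by (simp add: det_def copy_mat_def)
  also have "\<dots> = det A"
    unfolding det_def by (rule sum.reindex_bij_betw[OF perm_bij])
  finally show ?thesis .
qed

lemma borel_measurable_uncopy_vec [measurable]: "uncopy_vec \<in> borel_measurable borel"
  by (intro borel_measurable_continuous_onI linear_continuous_on
      linear_conv_bounded_linear[THEN iffD1]) (auto simp: linear_iff uncopy_vec_def vec_eq_iff)

lemma vimage_uncopy_vec_box: "uncopy_vec -` box l u = box (copy_vec l) (copy_vec u)"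
proof (intro set_eqI iffI)
  fix x assume "x \<in> uncopy_vec -` box l u"
  then have "l $ i < x $ to_copy i \<and> x $ to_copy i < u $ i" for i
    by (simp add: mem_box_cart uncopy_vec_def)
  from this[of "from_copy _"] show "x \<in> box (copy_vec l) (copy_vec u)"
    by (simp add: mem_box_cart copy_vec_def from_copy_inverse)
next
  fix x assume "x \<in> box (copy_vec l) (copy_vec u)"
  then have "l $ from_copy j < x $ j \<and> x $ j < u $ from_copy j" for j
    by (simp add: mem_box_cart copy_vec_def)
  from this[of "to_copy _"] show "x \<in> uncopy_vec -` box l u"
    by (simp add: mem_box_cart uncopy_vec_def to_copy_inverse)
qed

lemma Basis_vec_eq_range_axis: "(Basis :: (real^'n) set) = range (\<lambda>i. axis i 1)"
  by (auto simp: Basis_vec_def)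

lemma prod_Basis_vec: "(\<Prod>b\<in>(Basis :: (real^'n) set). f b) = (\<Prod>i\<in>UNIV. f (axis i 1))"
proof -
  have "inj (\<lambda>i::'n. axis i (1::real))"
    by (auto simp: inj_def axis_eq_axis)
  then show ?thesis
    unfolding Basis_vec_eq_range_axis by (simp add: prod.reindex comp_def)
qed

lemma distr_lborel_uncopy_vec: "distr lborel borel uncopy_vec = (lborel :: (real^'k::finite) measure)"
proof (rule lborel_eqI[symmetric])
  fix l u :: "real^'k" assume le: "\<And>b. b \<in> Basis \<Longrightarrow> l \<bullet> b \<le> u \<bullet> b"
  have "l $ i \<le> u $ i" for i
    using le[of "axis i 1"] by (simp add: inner_axis Basis_vec_eq_range_axis)
  then have "emeasure lborel (box (copy_vec l) (copy_vec u)) = (\<Prod>b\<in>Basis. (copy_vec u - copy_vec l) \<bullet> b)"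
    by (subst emeasure_lborel_box_eq) (auto simp: Basis_vec_eq_range_axis inner_axis copy_vec_def)
  also have "\<dots> = (\<Prod>j\<in>UNIV. (u - l) $ from_copy j)"
    by (simp add: prod_Basis_vec inner_axis copy_vec_def)
  also have "\<dots> = (\<Prod>b\<in>Basis. (u - l) \<bullet> b)"
    unfolding prod.reindex_bij_betw[OF bij_from_copy] prod_Basis_vec by (simp add: inner_axis)
  finally show "emeasure (distr lborel borel uncopy_vec) (box l u) = (\<Prod>b\<in>Basis. (u - l) \<bullet> b)"
    by (simp add: emeasure_distr vimage_uncopy_vec_box)
qed simp

lemma borel_measurable_matrix_vector_mult [measurable]:
  "(\<lambda>x. (A :: real^'n^'m) *v x) \<in> borel_measurable borel"
  by (intro borel_measurable_continuous_onI linear_continuous_on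
      linear_conv_bounded_linear[THEN iffD1] matrix_vector_mul_linear)

lemma emeasure_lborel_box_eq_det_vimage:
  fixes B :: "real^'n::{finite,wellorder}^'n::_"
  assumes "invertible B"
  shows "emeasure lborel (box l u) = ennreal \<bar>det B\<bar> * emeasure lborel ((\<lambda>x. B *v x) -` box l u)"
proof -
  let ?C = "matrix_inv B"
  have vimage: "(\<lambda>x. B *v x) -` box l u = (\<lambda>x. ?C *v x) ` box l u"
  proof (intro set_eqI iffI)
    fix x assume "x \<in> (\<lambda>x. B *v x) -` box l u"
    moreover have "x = ?C *v (B *v x)"
      by (simp add: matrix_vector_mul_assoc matrix_inv_left assms)
    ultimately show "x \<in> (\<lambda>x. ?C *v x) ` box l u"
      by blast
  qed (auto simp: matrix_vector_mul_assoc matrix_inv_right assms)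
  have borel: "(\<lambda>x. ?C *v x) ` box l u \<in> sets borel"
    unfolding vimage[symmetric]
    by (intro measurable_sets_borel[OF borel_measurable_matrix_vector_mult] borel_open open_box)
  have bdd: "bounded ((\<lambda>x. ?C *v x) ` box l u)"
    by (intro bounded_linear_image bounded_box linear_conv_bounded_linear[THEN iffD1]
        matrix_vector_mul_linear)
  have "emeasure lborel ((\<lambda>x. ?C *v x) ` box l u) = ennreal (measure lborel ((\<lambda>x. ?C *v x) ` box l u))"
    using emeasure_bounded_finite[OF bdd] by (simp add: emeasure_eq_ennreal_measure)
  also have "measure lborel ((\<lambda>x. ?C *v x) ` box l u) = measure lebesgue ((\<lambda>x. ?C *v x) ` box l u)"
    using borel by simp
  also have "\<dots> = \<bar>det ?C\<bar> * measure lborel (box l u)"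
    using measure_linear_image[OF matrix_vector_mul_linear lmeasurable_box] by simp
  finally have image: "emeasure lborel ((\<lambda>x. ?C *v x) ` box l u)
      = ennreal (\<bar>det ?C\<bar> * measure lborel (box l u))" .
  have "\<bar>det B\<bar> * \<bar>det ?C\<bar> = 1"
    using det_mul[of B ?C] assms by (simp add: matrix_inv_right abs_mult[symmetric])
  then have "ennreal \<bar>det B\<bar> * emeasure lborel ((\<lambda>x. B *v x) -` box l u)
      = ennreal (measure lborel (box l u))"
    unfolding vimage image by (simp add: ennreal_mult'[symmetric] mult.assoc[symmetric])
  also have "\<dots> = emeasure lborel (box l u)"
    using emeasure_bounded_finite[OF bounded_box, of l u] by (simp add: emeasure_eq_ennreal_measure)
  finally show ?thesis ..
qed

lemma lborel_eq_density_distr_linear: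
  fixes P :: "real^'k::finite^'k"
  assumes "invertible P"
  shows "lborel = density (distr lborel borel (\<lambda>x. P *v x)) (\<lambda>_. ennreal \<bar>det P\<bar>)"
proof (rule lborel_eqI)
  fix l u :: "real^'k" assume "\<And>b. b \<in> Basis \<Longrightarrow> l \<bullet> b \<le> u \<bullet> b"
  then have box_eq: "emeasure lborel (box l u) = (\<Prod>b\<in>Basis. (u - l) \<bullet> b)"
    by (simp add: emeasure_lborel_box_eq)
  have copy_inv: "invertible (copy_mat P)"
    using assms by (simp add: invertible_det_nz det_copy_mat)
  have uncopy: "emeasure lborel X = emeasure lborel (uncopy_vec -` X)" if "X \<in> sets borel"
    for X :: "(real^'k) set"
  proof -
    have "emeasure (distr lborel borel uncopy_vec) X = emeasure lborel (uncopy_vec -` X)"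
      using that by (simp add: emeasure_distr)
    then show ?thesis
      by (simp only: distr_lborel_uncopy_vec)
  qed
  have "emeasure (density (distr lborel borel (\<lambda>x. P *v x)) (\<lambda>_. ennreal \<bar>det P\<bar>)) (box l u)
      = ennreal \<bar>det P\<bar> * emeasure lborel ((\<lambda>x. P *v x) -` box l u)"
    by (simp add: emeasure_density emeasure_distr nn_integral_cmult_indicator)
  also have "emeasure lborel ((\<lambda>x. P *v x) -` box l u)
      = emeasure lborel ((\<lambda>x. copy_mat P *v x) -` box (copy_vec l) (copy_vec u))"
    by (subst uncopy)
      (auto intro: measurable_sets_borel[OF borel_measurable_matrix_vector_mult] borel_open
        simp: vimage_uncopy_vec_box[symmetric] uncopy_vec_copy_mat_mult vimage_def)
  also have "ennreal \<bar>det P\<bar> * \<dots> = emeasure lborel (box (copy_vec l) (copy_vec u))"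
    using emeasure_lborel_box_eq_det_vimage[OF copy_inv] by (simp add: det_copy_mat)
  also have "\<dots> = emeasure lborel (box l u)"
    using uncopy[of "box l u"] by (simp add: vimage_uncopy_vec_box)
  finally show "emeasure (density (distr lborel borel (\<lambda>x. P *v x)) (\<lambda>_. ennreal \<bar>det P\<bar>)) (box l u)
      = (\<Prod>b\<in>Basis. (u - l) \<bullet> b)"
    using box_eq by simp
qed simp

lemma nn_integral_lborel_affine_subst:
  fixes P :: "real^'k::finite^'k" and f :: "real^'k \<Rightarrow> ennreal"
  assumes "invertible P" and [measurable]: "f \<in> borel_measurable borel"
  shows "(\<integral>\<^sup>+x. f x \<partial>lborel) = ennreal \<bar>det P\<bar> * (\<integral>\<^sup>+z. f (c + P *v z) \<partial>lborel)"
proof -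
  have "(\<integral>\<^sup>+x. f x \<partial>lborel) = (\<integral>\<^sup>+x. f x \<partial>distr lborel borel ((+) c))"
    by (simp only: lborel_distr_plus)
  also have "\<dots> = (\<integral>\<^sup>+y. f (c + y) \<partial>density (distr lborel borel (\<lambda>x. P *v x)) (\<lambda>_. ennreal \<bar>det P\<bar>))"
    by (simp add: nn_integral_distr flip: lborel_eq_density_distr_linear[OF assms(1)])
  also have "\<dots> = ennreal \<bar>det P\<bar> * (\<integral>\<^sup>+z. f (c + P *v z) \<partial>lborel)"
    by (simp add: nn_integral_density nn_integral_distr nn_integral_cmult)
  finally show ?thesis .
qed

section \<open>Gaussian integrals and the Chernoff bound\<close>

lemma real_sqrt_prod: "sqrt (\<Prod>i\<in>A. f i) = (\<Prod>i\<in>A. sqrt (f i))"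
  by (induction A rule: infinite_finite_induct) (auto simp: real_sqrt_mult)

lemma nn_integral_lborel_prod_coord:
  fixes h :: "'k::finite \<Rightarrow> real \<Rightarrow> real"
  assumes "\<And>i. h i \<in> borel_measurable borel" and "\<And>i x. 0 \<le> h i x"
  shows "(\<integral>\<^sup>+z. ennreal (\<Prod>i\<in>UNIV. h i (z $ i)) \<partial>lborel) = (\<Prod>i\<in>UNIV. \<integral>\<^sup>+x. ennreal (h i x) \<partial>lborel)"
proof -
  define f where "f b x = ennreal (h (axis_index b) x)" for b :: "real^'k" and x
  have "(\<integral>\<^sup>+z. ennreal (\<Prod>i\<in>UNIV. h i (z $ i)) \<partial>lborel) = (\<integral>\<^sup>+z. (\<Prod>b\<in>Basis. f b (z \<bullet> b)) \<partial>lborel)"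
    by (intro nn_integral_cong) (simp add: prod_Basis_vec f_def inner_axis prod_ennreal assms(2))
  also have "\<dots> = (\<Prod>b\<in>Basis. (\<integral>\<^sup>+x. f b x \<partial>lborel))"
    by (rule nn_integral_lborel_prod) (use assms(1) in \<open>auto simp: f_def\<close>)
  also have "\<dots> = (\<Prod>i\<in>UNIV. \<integral>\<^sup>+x. ennreal (h i x) \<partial>lborel)"
    by (simp add: prod_Basis_vec f_def)
  finally show ?thesis .
qed

lemma nn_integral_exp_quadratic:
  fixes a b :: real
  assumes "a > 0"
  shows "(\<integral>\<^sup>+x. ennreal (exp (- (a / 2) * x^2 + b * x)) \<partial>lborel)
    = ennreal (sqrt (2 * pi / a) * exp (b^2 / (2 * a)))"
proof -
  define C where "C = sqrt (2 * pi / a) * exp (b^2 / (2 * a))"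
  have "C \<ge> 0"
    using assms by (simp add: C_def)
  have "exp (- (a / 2) * x^2 + b * x) = C * normal_density (b / a) (1 / sqrt a) x" for x
  proof -
    have density: "normal_density (b / a) (1 / sqrt a) x = sqrt (a / (2 * pi)) * exp (- (a / 2) * (x - b / a)^2)"
      using assms by (simp add: normal_density_def power_divide real_sqrt_divide field_simps)
    have one: "sqrt (2 * pi / a) * sqrt (a / (2 * pi)) = 1"
      using assms by (simp add: real_sqrt_mult[symmetric])
    have "- (a / 2) * x^2 + b * x = b^2 / (2 * a) + - (a / 2) * (x - b / a)^2"
      using assms by (simp add: field_simps power2_eq_square)
    then have "exp (- (a / 2) * x^2 + b * x) = exp (b^2 / (2 * a)) * exp (- (a / 2) * (x - b / a)^2)"
      by (simp only: exp_add)
    also have "\<dots> = (sqrt (2 * pi / a) * sqrt (a / (2 * pi))) * exp (b^2 / (2 * a)) * exp (- (a / 2) * (x - b / a)^2)"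
      unfolding one by simp
    also have "\<dots> = C * normal_density (b / a) (1 / sqrt a) x"
      unfolding density C_def by (simp only: mult_ac)
    finally show ?thesis .
  qed
  then have "(\<integral>\<^sup>+x. ennreal (exp (- (a / 2) * x^2 + b * x)) \<partial>lborel)
      = ennreal C * (\<integral>\<^sup>+x. ennreal (normal_density (b / a) (1 / sqrt a) x) \<partial>lborel)"
    using \<open>C \<ge> 0\<close> by (simp add: ennreal_mult nn_integral_cmult)
  also have "(\<integral>\<^sup>+x. ennreal (normal_density (b / a) (1 / sqrt a) x) \<partial>lborel) = 1"
    using assms by (subst nn_integral_eq_integral) (auto intro!: integrable_normal_density)
  finally show ?thesis
    by (simp add: C_def)
qed

lemma nn_integral_exp_tilted_square:
  fixes s g m :: real
  assumes "1 < s" and "g < s"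
  shows "(\<integral>\<^sup>+y. ennreal (exp (- (s * y^2 - g * (y - m)^2) / (2 * (s - 1))) / sqrt (2 * pi)) \<partial>lborel)
    = ennreal (sqrt ((s - 1) / (s - g)) * exp (s / (2 * (s - 1)) * (g * m^2 / (s - g))))"
proof -
  define a where "a = (s - g) / (s - 1)"
  define b where "b = - g * m / (s - 1)"
  define c where "c = g * m^2 / (2 * (s - 1))"
  have "a > 0"
    using assms by (simp add: a_def)
  have "s - 1 \<noteq> 0" and "s - g \<noteq> 0"
    using assms by simp_all
  have pointwise: "exp (- (s * y^2 - g * (y - m)^2) / (2 * (s - 1))) / sqrt (2 * pi)
      = exp c / sqrt (2 * pi) * exp (- (a / 2) * y^2 + b * y)" for y
  proof -
    have "- (s * y^2 - g * (y - m)^2) / (2 * (s - 1)) = c + (- (a / 2) * y^2 + b * y)"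
      using assms by (simp add: a_def b_def c_def divide_simps power2_eq_square) (simp add: algebra_simps)
    then show ?thesis
      by (simp add: exp_add)
  qed
  have "(\<integral>\<^sup>+y. ennreal (exp (- (s * y^2 - g * (y - m)^2) / (2 * (s - 1))) / sqrt (2 * pi)) \<partial>lborel)
      = (\<integral>\<^sup>+y. ennreal (exp c / sqrt (2 * pi)) * ennreal (exp (- (a / 2) * y^2 + b * y)) \<partial>lborel)"
    by (intro nn_integral_cong, simp only: pointwise, rule ennreal_mult) simp_all
  also have "\<dots> = ennreal (exp c / sqrt (2 * pi)) * (\<integral>\<^sup>+y. ennreal (exp (- (a / 2) * y^2 + b * y)) \<partial>lborel)"
    by (simp add: nn_integral_cmult)
  also have "\<dots> = ennreal (exp c / sqrt (2 * pi)) * ennreal (sqrt (2 * pi / a) * exp (b^2 / (2 * a)))"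
    by (simp only: nn_integral_exp_quadratic[OF \<open>a > 0\<close>])
  also have "\<dots> = ennreal (exp c / sqrt (2 * pi) * (sqrt (2 * pi / a) * exp (b^2 / (2 * a))))"
    using \<open>a > 0\<close> by (intro ennreal_mult[symmetric]) simp_all
  also have "exp c / sqrt (2 * pi) * (sqrt (2 * pi / a) * exp (b^2 / (2 * a)))
      = sqrt (2 * pi / a) / sqrt (2 * pi) * exp (c + b^2 / (2 * a))"
    by (simp add: exp_add)
  also have "sqrt (2 * pi / a) / sqrt (2 * pi) = sqrt ((s - 1) / (s - g))"
    using assms by (simp add: a_def real_sqrt_divide real_sqrt_mult)
  also have "c + b^2 / (2 * a) = s / (2 * (s - 1)) * (g * m^2 / (s - g))"
    using \<open>s - 1 \<noteq> 0\<close> \<open>s - g \<noteq> 0\<close>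
    by (simp add: a_def b_def c_def divide_simps) (simp add: algebra_simps power2_eq_square)
  finally show ?thesis .
qed

lemma prod_tilted_gauss_factors:
  fixes G :: "real^'k^'k" and m :: "real^'k"
  assumes G: "diagonal_mat G" and "1 < s" and "\<And>i. G $ i $ i < s"
  shows "(\<Prod>i\<in>UNIV. sqrt ((s - 1) / (s - G $ i $ i)) * exp (s / (2 * (s - 1)) * (G $ i $ i * (m $ i)^2 / (s - G $ i $ i))))
    = (s - 1) powr (CARD('k) / 2) / sqrt (det (s *\<^sub>R mat 1 - G))
        * exp (s / (2 * (s - 1)) * (m \<bullet> (matrix_inv (s *\<^sub>R mat 1 - G) *v (G *v m))))"
proof -
  have gap: "s - G $ i $ i \<noteq> 0" for i
    using assms(3)[of i] by simp
  have "(matrix_inv (s *\<^sub>R mat 1 - G) *v v) $ i = v $ i / (s - G $ i $ i)" for v i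
    using matrix_inv_diagonal_mat_mult_vec_nth[OF diagonal_mat_shift[OF G], of s v i] gap
    by (simp add: mat_def)
  then have "(\<Sum>i\<in>UNIV. s / (2 * (s - 1)) * (G $ i $ i * (m $ i)^2 / (s - G $ i $ i)))
      = s / (2 * (s - 1)) * (m \<bullet> (matrix_inv (s *\<^sub>R mat 1 - G) *v (G *v m)))"
    by (simp add: inner_vec_def sum_distrib_left diagonal_mat_mult_vec_nth[OF G] power2_eq_square mult_ac)
  moreover have "(\<Prod>i\<in>UNIV. sqrt (s - G $ i $ i)) = sqrt (det (s *\<^sub>R mat 1 - G))"
    unfolding det_diagonal_mat[OF diagonal_mat_shift[OF G]] real_sqrt_prod by (simp add: mat_def)
  moreover have "sqrt (s - 1) ^ CARD('k) = (s - 1) powr (CARD('k) / 2)"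
    using assms(2) by (simp add: powr_half_sqrt_powr powr_realpow real_sqrt_power)
  ultimately show ?thesis
    by (simp add: prod.distrib prod_dividef real_sqrt_divide exp_sum[symmetric])
qed

lemma nn_integral_exp_tilted_inner_diagonal:
  fixes G :: "real^'k^'k" and m :: "real^'k"
  assumes G: "diagonal_mat G" and "1 < s" and "\<And>i. G $ i $ i < s"
  shows "(\<integral>\<^sup>+z. ennreal (exp (- (s * (z \<bullet> z) - (z - m) \<bullet> (G *v (z - m))) / (2 * (s - 1)))
              / sqrt ((2 * pi) ^ CARD('k))) \<partial>lborel)
    = ennreal ((s - 1) powr (CARD('k) / 2) / sqrt (det (s *\<^sub>R mat 1 - G))
        * exp (s / (2 * (s - 1)) * (m \<bullet> (matrix_inv (s *\<^sub>R mat 1 - G) *v (G *v m)))))"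
proof -
  define h where "h i y = exp (- (s * y^2 - G $ i $ i * (y - m $ i)^2) / (2 * (s - 1))) / sqrt (2 * pi)"
    for i y
  have pointwise: "exp (- (s * (z \<bullet> z) - (z - m) \<bullet> (G *v (z - m))) / (2 * (s - 1))) / sqrt ((2 * pi) ^ CARD('k))
      = (\<Prod>i\<in>UNIV. h i (z $ i))" for z
  proof -
    have "z \<bullet> z = (\<Sum>i\<in>UNIV. (z $ i)^2)"
      by (simp add: inner_vec_def power2_eq_square)
    moreover have "(z - m) \<bullet> (G *v (z - m)) = (\<Sum>i\<in>UNIV. G $ i $ i * (z $ i - m $ i)^2)"
      unfolding inner_diagonal_mat_mult_vec[OF G] by (simp add: power2_eq_square mult_ac)
    ultimately have "- (s * (z \<bullet> z) - (z - m) \<bullet> (G *v (z - m))) / (2 * (s - 1))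
        = (\<Sum>i\<in>UNIV. - (s * (z $ i)^2 - G $ i $ i * (z $ i - m $ i)^2) / (2 * (s - 1)))"
      by (simp add: sum_divide_distrib[symmetric] sum_subtractf sum_distrib_left)
    then show ?thesis
      unfolding h_def prod_dividef prod_constant real_sqrt_power[symmetric] exp_sum[OF finite, symmetric]
      by simp
  qed
  have "(\<integral>\<^sup>+z. ennreal (exp (- (s * (z \<bullet> z) - (z - m) \<bullet> (G *v (z - m))) / (2 * (s - 1)))
              / sqrt ((2 * pi) ^ CARD('k))) \<partial>lborel)
      = (\<Prod>i\<in>UNIV. \<integral>\<^sup>+y. ennreal (h i y) \<partial>lborel)"
    unfolding pointwise by (rule nn_integral_lborel_prod_coord) (simp_all add: h_def)
  also have "\<dots> = (\<Prod>i\<in>UNIV. ennreal (sqrt ((s - 1) / (s - G $ i $ i))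
      * exp (s / (2 * (s - 1)) * (G $ i $ i * (m $ i)^2 / (s - G $ i $ i)))))"
    unfolding h_def using assms by (intro prod.cong refl nn_integral_exp_tilted_square)
  also have "\<dots> = ennreal (\<Prod>i\<in>UNIV. sqrt ((s - 1) / (s - G $ i $ i))
      * exp (s / (2 * (s - 1)) * (G $ i $ i * (m $ i)^2 / (s - G $ i $ i))))"
    using assms(2,3) by (intro prod_ennreal mult_nonneg_nonneg) (auto simp: less_imp_le)
  finally show ?thesis
    unfolding prod_tilted_gauss_factors[OF assms] .
qed

lemma borel_measurable_gauss_density [measurable]: "gauss_density mu Sig \<in> borel_measurable borel"
  unfolding gauss_density_def by measurable

lemma gauss_density_shift:
  fixes mu :: "real^'k"
  shows "gauss_density mu Sig (mu + P *v z)
    = exp (- (z \<bullet> ((transpose P ** matrix_inv Sig ** P) *v z)) / 2) / sqrt ((2 * pi) ^ CARD('k) * det Sig)"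
  by (simp add: gauss_density_def inner_mult_vec_congruence[symmetric])

lemma emeasure_density_Chernoff:
  fixes f g :: "'a \<Rightarrow> real"
  assumes "0 < t" and [measurable]: "f \<in> borel_measurable M" "g \<in> borel_measurable M"
  shows "emeasure (density M (\<lambda>x. ennreal (g x))) {x \<in> space M. c < f x}
    \<le> ennreal (exp (- t * c)) * (\<integral>\<^sup>+x. ennreal (g x * exp (t * f x)) \<partial>M)"
proof -
  let ?N = "density M (\<lambda>x. ennreal (g x))"
  have "emeasure ?N {x \<in> space M. c < f x} \<le> emeasure ?N {x \<in> space ?N. c \<le> f x}"
    by (intro emeasure_mono) auto
  also have "\<dots> \<le> ennreal (exp (- t * c)) * (\<integral>\<^sup>+x. ennreal (exp (t * f x)) * indicator (space ?N) x \<partial>?N)"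
    using assms(1) by (intro Chernoff_ineq_nn_integral_ge) auto
  also have "(\<integral>\<^sup>+x. ennreal (exp (t * f x)) * indicator (space ?N) x \<partial>?N)
      = (\<integral>\<^sup>+x. ennreal (g x * exp (t * f x)) \<partial>M)"
    by (auto simp: nn_integral_density ennreal_mult'' intro!: nn_integral_cong)
  finally show ?thesis .
qed

section \<open>The log-likelihood ratio in whitened coordinates\<close>

locale gaussian_llr =
  fixes muX muX' :: "real^'k" and SigX SigX' S U Gam :: "real^'k^'k"
  assumes pd_SigX: "symmetric_pd SigX" and pd_SigX': "symmetric_pd SigX'"
    and pd_S: "symmetric_pd S" and S_square: "S ** S = SigX"
    and orthogonal_U: "orthogonal_matrix U" and diagonal_Gam: "diagonal_mat Gam"
    and eigen_decomposition: "U ** Gam ** transpose U = S ** matrix_inv SigX' ** S"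
begin

definition llr :: "real^'k \<Rightarrow> real"
  where "llr q = ln (gauss_density muX SigX q / gauss_density muX' SigX' q)"

definition unwhiten :: "real^'k^'k"
  where "unwhiten = S ** U"

definition mu_whitened :: "real^'k"
  where "mu_whitened = transpose U *v (matrix_inv S *v (muX' - muX))"

lemma transpose_S: "transpose S = S"
  using pd_S by (simp add: symmetric_pd_def)

lemma transpose_U_U: "transpose U ** U = mat 1"
  using orthogonal_U by (simp add: orthogonal_matrix_def)

lemma S_matrix_inv_SigX_S: "S ** matrix_inv SigX ** S = mat 1"
proof -
  have "S ** (S ** matrix_inv SigX) = mat 1"
    using matrix_inv_right[OF symmetric_pd_invertible[OF pd_SigX]]
    by (simp add: S_square matrix_mul_assoc)
  then show ?thesis
    by (simp add: matrix_left_right_inverse1 matrix_mul_assoc)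
qed

lemma congruence_matrix_inv_SigX: "transpose unwhiten ** matrix_inv SigX ** unwhiten = mat 1"
proof -
  have "transpose unwhiten ** matrix_inv SigX ** unwhiten
      = transpose U ** (S ** matrix_inv SigX ** S) ** U"
    by (simp add: unwhiten_def matrix_transpose_mul transpose_S matrix_mul_assoc)
  then show ?thesis
    by (simp add: S_matrix_inv_SigX_S transpose_U_U)
qed

lemma congruence_matrix_inv_SigX': "transpose unwhiten ** matrix_inv SigX' ** unwhiten = Gam"
proof -
  have "transpose unwhiten ** matrix_inv SigX' ** unwhiten
      = transpose U ** (S ** matrix_inv SigX' ** S) ** U"
    by (simp add: unwhiten_def matrix_transpose_mul transpose_S matrix_mul_assoc)
  also have "\<dots> = (transpose U ** U) ** Gam ** (transpose U ** U)"
    by (simp add: eigen_decomposition[symmetric] matrix_mul_assoc)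
  finally show ?thesis
    by (simp add: transpose_U_U)
qed

lemma unwhiten_mu_whitened: "unwhiten *v mu_whitened = muX' - muX"
proof -
  have "unwhiten *v mu_whitened = S *v (matrix_inv S *v (muX' - muX))"
    by (simp add: unwhiten_def mu_whitened_def matrix_vector_mul_assoc[symmetric] orthogonal_matrix_mult_vec_cancel(2)[OF orthogonal_U]
        del: transpose_matrix_vector)
  then show ?thesis
    using matrix_inv_right[OF symmetric_pd_invertible[OF pd_S]] by (simp add: matrix_vector_mul_assoc)
qed

lemma det_unwhiten_sq: "det unwhiten ^ 2 = det SigX"
  using det_orthogonal_matrix[OF orthogonal_U]
  by (auto simp: unwhiten_def det_mul S_square[symmetric] power2_eq_square)

lemma det_SigX_pos: "0 < det SigX"
proof -
  have "det S \<noteq> 0"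
    using symmetric_pd_invertible[OF pd_S] by (simp add: invertible_det_nz)
  then have "0 < det S * det S"
    by (auto simp: zero_less_mult_iff linorder_neq_iff)
  then show ?thesis
    by (simp flip: S_square add: det_mul)
qed

lemma invertible_unwhiten: "invertible unwhiten"
  using det_unwhiten_sq det_SigX_pos by (auto simp: invertible_det_nz)

lemma borel_measurable_llr [measurable]: "llr \<in> borel_measurable borel"
  unfolding llr_def by measurable

lemma Gam_diag_pos: "0 < Gam $ i $ i"
proof -
  let ?v = "unwhiten *v axis i 1"
  have inverse: "matrix_inv unwhiten *v (unwhiten *v x) = x" for x
    using invertible_unwhiten by (simp add: matrix_vector_mul_assoc matrix_inv_left)
  have "?v \<noteq> 0"
  proof
    assume "?v = 0"
    with inverse[of "axis i 1"] have "axis i (1::real) = 0"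
      by simp
    then show False
      by simp
  qed
  then have "0 < ?v \<bullet> (matrix_inv SigX' *v ?v)"
    by (rule symmetric_pd_inner_matrix_inv_pos[OF pd_SigX'])
  also have "\<dots> = axis i 1 \<bullet> (Gam *v axis i 1)"
    by (simp only: inner_mult_vec_congruence congruence_matrix_inv_SigX')
  also have "\<dots> = Gam $ i $ i"
    by (simp add: inner_axis' diagonal_mat_mult_vec_nth[OF diagonal_Gam])
  finally show ?thesis .
qed

lemma det_Gam_pos: "0 < det Gam"
  by (simp add: det_diagonal_mat[OF diagonal_Gam] Gam_diag_pos prod_pos)

lemma det_SigX'_mult_det_Gam: "det SigX' * det Gam = det SigX"
proof -
  have "det SigX' * det (matrix_inv SigX') = 1"
    using det_mul[of SigX' "matrix_inv SigX'"] matrix_inv_right[OF symmetric_pd_invertible[OF pd_SigX']]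
    by simp
  moreover have "det Gam = det unwhiten ^ 2 * det (matrix_inv SigX')"
    by (simp flip: congruence_matrix_inv_SigX' add: det_mul power2_eq_square)
  ultimately show ?thesis
    by (simp add: det_unwhiten_sq)
qed

lemma abs_det_unwhiten_gauss_density:
  "\<bar>det unwhiten\<bar> * gauss_density muX SigX (muX + unwhiten *v z)
    = exp (- (z \<bullet> z) / 2) / sqrt ((2 * pi) ^ CARD('k))"
proof -
  have "\<bar>det unwhiten\<bar> = sqrt (det SigX)"
    by (simp flip: det_unwhiten_sq)
  then show ?thesis
    using det_SigX_pos
    by (simp add: gauss_density_shift congruence_matrix_inv_SigX real_sqrt_mult)
qed

lemma llr_unwhiten:
  "llr (muX + unwhiten *v z)
    = ((z - mu_whitened) \<bullet> (Gam *v (z - mu_whitened)) - z \<bullet> z) / 2 - ln (det Gam) / 2"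
proof -
  let ?Z = "z \<bullet> z" and ?W = "(z - mu_whitened) \<bullet> (Gam *v (z - mu_whitened))"
  let ?n = "(2 * pi) ^ CARD('k)"
  have "muX + unwhiten *v z = muX' + unwhiten *v (z - mu_whitened)"
    by (simp add: matrix_vector_mult_diff_distrib unwhiten_mu_whitened)
  then have density': "gauss_density muX' SigX' (muX + unwhiten *v z) = exp (- ?W / 2) / sqrt (?n * det SigX')"
    by (simp add: gauss_density_shift congruence_matrix_inv_SigX')
  have density: "gauss_density muX SigX (muX + unwhiten *v z) = exp (- ?Z / 2) / sqrt (?n * det SigX)"
    by (simp add: gauss_density_shift congruence_matrix_inv_SigX)
  have "det SigX' / det SigX = 1 / det Gam"
    using det_SigX'_mult_det_Gam det_Gam_pos det_SigX_pos by (simp add: field_simps)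
  then have ratio_sqrt: "sqrt (?n * det SigX') / sqrt (?n * det SigX) = 1 / sqrt (det Gam)"
    by (simp add: real_sqrt_mult real_sqrt_divide[symmetric]) (simp add: real_sqrt_divide)
  moreover have ratio_exp: "exp (- ?Z / 2) / exp (- ?W / 2) = exp ((?W - ?Z) / 2)"
    by (simp add: exp_diff[symmetric] diff_divide_distrib)
  moreover have "(a / b) / (c / d) = (a / c) * (d / b)" for a b c d :: real
    by (simp add: divide_divide_times_eq times_divide_times_eq mult.commute)
  ultimately have "gauss_density muX SigX (muX + unwhiten *v z) / gauss_density muX' SigX' (muX + unwhiten *v z)
      = exp ((?W - ?Z) / 2) * (1 / sqrt (det Gam))"
    unfolding density density' by metis
  then show ?thesis
    using det_Gam_pos by (simp add: llr_def ln_div ln_sqrt)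
qed

lemma abs_det_unwhiten_mult_exp_llr:
  assumes "1 < s"
  shows "\<bar>det unwhiten\<bar> * (gauss_density muX SigX (muX + unwhiten *v z)
        * exp (llr (muX + unwhiten *v z) / (s - 1)))
      = det Gam powr (- (1 / (2 * (s - 1))))
        * (exp (- (s * (z \<bullet> z) - (z - mu_whitened) \<bullet> (Gam *v (z - mu_whitened))) / (2 * (s - 1)))
          / sqrt ((2 * pi) ^ CARD('k)))"
proof -
  let ?W = "(z - mu_whitened) \<bullet> (Gam *v (z - mu_whitened))"
  let ?n = "(2 * pi) ^ CARD('k)"
  have exponent: "- Z / 2 + ((W - Z) / 2 - L / 2) / (s - 1)
      = - (1 / (2 * (s - 1))) * L + - (s * Z - W) / (2 * (s - 1))" for Z W L :: real
    using assms by (simp add: divide_simps) (simp add: algebra_simps)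
  have "\<bar>det unwhiten\<bar> * (gauss_density muX SigX (muX + unwhiten *v z)
        * exp (llr (muX + unwhiten *v z) / (s - 1)))
      = exp (- (z \<bullet> z) / 2) / sqrt ?n * exp (llr (muX + unwhiten *v z) / (s - 1))"
    by (simp only: mult.assoc[symmetric] abs_det_unwhiten_gauss_density)
  also have "\<dots> = exp (- (z \<bullet> z) / 2 + ((?W - z \<bullet> z) / 2 - ln (det Gam) / 2) / (s - 1)) / sqrt ?n"
    unfolding llr_unwhiten exp_add by simp
  also have "\<dots> = exp (- (1 / (2 * (s - 1))) * ln (det Gam) + - (s * (z \<bullet> z) - ?W) / (2 * (s - 1))) / sqrt ?n"
    by (simp only: exponent)
  also have "\<dots> = det Gam powr (- (1 / (2 * (s - 1)))) * (exp (- (s * (z \<bullet> z) - ?W) / (2 * (s - 1))) / sqrt ?n)"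
    using det_Gam_pos unfolding exp_add by (simp add: powr_def ac_simps)
  finally show ?thesis .
qed

lemma nn_integral_exp_llr:
  assumes "1 < s" and "\<And>i. Gam $ i $ i < s"
  shows "(\<integral>\<^sup>+q. ennreal (gauss_density muX SigX q * exp (llr q / (s - 1))) \<partial>lborel)
    = ennreal ((s - 1) powr (CARD('k) / 2)
        / (det Gam powr (1 / (2 * (s - 1))) * sqrt (det (s *\<^sub>R mat 1 - Gam)))
        * exp (s / (2 * (s - 1)) * (mu_whitened \<bullet> (matrix_inv (s *\<^sub>R mat 1 - Gam) *v (Gam *v mu_whitened)))))"
proof -
  let ?c = "det Gam powr (- (1 / (2 * (s - 1))))"
  let ?g = "\<lambda>z. exp (- (s * (z \<bullet> z) - (z - mu_whitened) \<bullet> (Gam *v (z - mu_whitened))) / (2 * (s - 1)))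
    / sqrt ((2 * pi) ^ CARD('k))"
  have "(\<integral>\<^sup>+q. ennreal (gauss_density muX SigX q * exp (llr q / (s - 1))) \<partial>lborel)
      = ennreal \<bar>det unwhiten\<bar> * (\<integral>\<^sup>+z. ennreal (gauss_density muX SigX (muX + unwhiten *v z)
          * exp (llr (muX + unwhiten *v z) / (s - 1))) \<partial>lborel)"
    using invertible_unwhiten by (rule nn_integral_lborel_affine_subst) measurable
  also have "\<dots> = (\<integral>\<^sup>+z. ennreal \<bar>det unwhiten\<bar> * ennreal (gauss_density muX SigX (muX + unwhiten *v z)
          * exp (llr (muX + unwhiten *v z) / (s - 1))) \<partial>lborel)"
    by (rule nn_integral_cmult[symmetric]) measurable
  also have "\<dots> = (\<integral>\<^sup>+z. ennreal ?c * ennreal (?g z) \<partial>lborel)"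
    by (intro nn_integral_cong) (simp only: ennreal_mult'[symmetric, OF abs_ge_zero]
        ennreal_mult'[symmetric, OF powr_ge_zero] abs_det_unwhiten_mult_exp_llr[OF assms(1)])
  also have "\<dots> = ennreal ?c * (\<integral>\<^sup>+z. ennreal (?g z) \<partial>lborel)"
    by (rule nn_integral_cmult) measurable
  also have "\<dots> = ennreal ?c * ennreal ((s - 1) powr (CARD('k) / 2) / sqrt (det (s *\<^sub>R mat 1 - Gam))
        * exp (s / (2 * (s - 1)) * (mu_whitened \<bullet> (matrix_inv (s *\<^sub>R mat 1 - Gam) *v (Gam *v mu_whitened)))))"
    by (simp only: nn_integral_exp_tilted_inner_diagonal[OF diagonal_Gam assms])
  also have "\<dots> = ennreal (?c * ((s - 1) powr (CARD('k) / 2) / sqrt (det (s *\<^sub>R mat 1 - Gam))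
        * exp (s / (2 * (s - 1)) * (mu_whitened \<bullet> (matrix_inv (s *\<^sub>R mat 1 - Gam) *v (Gam *v mu_whitened))))))"
    by (rule ennreal_mult'[symmetric]) simp
  finally show ?thesis
    by (simp add: powr_minus_divide)
qed

lemma measure_llr_gt_le:
  assumes "1 < s" and "\<And>i. Gam $ i $ i < s"
  shows "measure (gauss_measure muX SigX) {q. eps < llr q}
    \<le> (s - 1) powr (CARD('k) / 2)
        / (det Gam powr (1 / (2 * (s - 1))) * sqrt (det (s *\<^sub>R mat 1 - Gam)))
        * exp (- eps / (s - 1) + s / (2 * (s - 1))
          * (mu_whitened \<bullet> (matrix_inv (s *\<^sub>R mat 1 - Gam) *v (Gam *v mu_whitened))))"
    (is "_ \<le> ?A * exp (- eps / (s - 1) + ?B)")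
proof -
  have "emeasure (gauss_measure muX SigX) {q. eps < llr q}
      \<le> ennreal (exp (- eps / (s - 1)))
        * (\<integral>\<^sup>+q. ennreal (gauss_density muX SigX q * exp (llr q / (s - 1))) \<partial>lborel)"
    using emeasure_density_Chernoff[of "1 / (s - 1)" llr lborel "gauss_density muX SigX" eps] assms(1)
    unfolding gauss_measure_def by simp
  also have "\<dots> = ennreal (exp (- eps / (s - 1))) * ennreal (?A * exp ?B)"
    by (simp only: nn_integral_exp_llr[OF assms])
  also have "\<dots> = ennreal (exp (- eps / (s - 1)) * (?A * exp ?B))"
    by (rule ennreal_mult'[symmetric]) simp
  also have "\<dots> = ennreal (?A * exp (- eps / (s - 1) + ?B))"
    unfolding exp_add by (intro arg_cong[where f = ennreal]) (simp add: mult_ac)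
  finally have "emeasure (gauss_measure muX SigX) {q. eps < llr q} \<le> ennreal (?A * exp (- eps / (s - 1) + ?B))" .
  moreover have "0 < det (s *\<^sub>R mat 1 - Gam)"
    using det_diagonal_mat_shift_pos[OF diagonal_Gam assms(2)] .
  ultimately show ?thesis
    unfolding measure_def by (intro enn2real_leI) simp_all
qed

end

theorem lemma1:
  fixes eps s :: real
    and muX muX' :: "real^'k"
    and SigX SigX' S U Gam :: "real^'k^'k"
  assumes "symmetric_pd SigX" and "symmetric_pd SigX'"
    and "symmetric_pd S" and "S ** S = SigX"
    and "orthogonal_matrix U" and "diagonal_mat Gam"
    and "U ** Gam ** transpose U = S ** matrix_inv SigX' ** S"
    and "s > max 1 (lambda_max (S ** matrix_inv SigX' ** S))"
  shows "let L = (\<lambda>q. ln (gauss_density muX SigX q / gauss_density muX' SigX' q));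
             mu = transpose U *v (matrix_inv S *v (muX' - muX));
             k = real CARD('k)
         in measure (gauss_measure muX SigX) {q. L q > eps}
            \<le> (s - 1) powr (k / 2)
               / (det Gam powr (1 / (2 * (s - 1))) * sqrt (det (s *\<^sub>R mat 1 - Gam)))
               * exp (- eps / (s - 1)
                      + s / (2 * (s - 1)) * (mu \<bullet> (matrix_inv (s *\<^sub>R mat 1 - Gam) *v (Gam *v mu))))"
proof -
  interpret gaussian_llr muX muX' SigX SigX' S U Gam
    using assms(1-7) by unfold_locales
  have "1 < s"
    using assms(8) by simp
  moreover have "Gam $ i $ i < s" for i
    using diagonal_le_lambda_max[OF orthogonal_U diagonal_Gam, of i] assms(7,8) by simp
  ultimately show ?thesis
    using measure_llr_gt_le unfolding Let_def llr_def mu_whitened_def by simp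
qed

end
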